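(* Let $\Omega\subset\mathbb{R}^3$ be a domain and $\mathbf{x}=\boldsymbol{\chi}(\mathbf{X})$ a smooth, one-to-one, invertible map of $\Omega$ onto $\omega$, with deformation gradient $F_{iI}=\partial x_i/\partial X_I$, Jacobian $\Lambda=\det\mathbf{F}>0$, and polar decomposition $\mathbf{F}=\mathbf{V}\mathbf{R}$ ($\mathbf{R}$ proper orthogonal, $\mathbf{V}$ symmetric positive definite with $\mathbf{V}^2=\mathbf{F}\mathbf{F}^t$). Suppose the rotation $\mathbf{R}$ is constant. Let $\kappa_0,\rho_0>0$ be constants. Then the normal acoustic fluid with energy density $$E_0=\kappa_0\big(\partial U_I/\partial X_I\big)^2+\rho_0\,\dot{\mathbf{U}}\cdot\dot{\mathbf{U}}\quad\text{in }\Omega$$ is mapped to a metafluid with isotropic inertia, with energy density $$E=\lambda\big(V_{ij}\,\partial u_j/\partial x_i\big)^2+\rho\,\dot{\mathbf{u}}\cdot\dot{\mathbf{u}}\quad\text{in }\omega,\qquad \lambda=\Lambda^{-1}\kappa_0,\quad \rho=\Lambda^{-1}\rho_0,$$ in the sense that these energy densities are equivalent ($E\,\mathrm{d}v=E_0\,\mathrm{d}V$) under the correspondence of displacements $\mathbf{u}=\mathbf{R}\mathbf{U}$. Moreover, the total mass $\int_\omega\rho\,\mathrm{d}v$ of the deformed region equals the total mass $\int_\Omega\rho_0\,\mathrm{d}V$ of $\Omega$.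
   Context: Repeated indices are summed; upper-case indices refer to undeformed coordinates $\mathbf{X}$, lower-case to deformed coordinates $\mathbf{x}$; $\mathrm{d}v=\Lambda\,\mathrm{d}V$. Quantities in $\omega$ are evaluated at $\mathbf{x}=\boldsymbol{\chi}(\mathbf{X})$. *)

theory Defs
  imports "HOL-Analysis.Analysis"
begin

(* Spatial gradient matrix of a time-dependent vector field W(y,t) at (y,t):
   grad_field W t y $ i $ j = \<partial> W_i / \<partial> y_j *)
definition grad_field :: "(real^3 \<Rightarrow> real \<Rightarrow> real^3) \<Rightarrow> real \<Rightarrow> real^3 \<Rightarrow> real^3^3" where
  "grad_field W t y = jacobian (\<lambda>z. W z t) (at y)"

definition vel_field :: "(real^3 \<Rightarrow> real \<Rightarrow> real^3) \<Rightarrow> real \<Rightarrow> real^3 \<Rightarrow> real^3" where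
  "vel_field W t y = vector_derivative (\<lambda>s. W y s) (at t)"

definition E0_density :: "real \<Rightarrow> real \<Rightarrow> (real^3 \<Rightarrow> real \<Rightarrow> real^3) \<Rightarrow> real \<Rightarrow> real^3 \<Rightarrow> real" where
  "E0_density \<kappa>0 \<rho>0 U t X =
     \<kappa>0 * (\<Sum>I\<in>UNIV. grad_field U t X $ I $ I)\<^sup>2 + \<rho>0 * (vel_field U t X \<bullet> vel_field U t X)"

definition E_density :: "real \<Rightarrow> real \<Rightarrow> real^3^3 \<Rightarrow> (real^3 \<Rightarrow> real \<Rightarrow> real^3) \<Rightarrow> real \<Rightarrow> real^3 \<Rightarrow> real" where
  "E_density lam \<rho> V u t x =
     lam * (\<Sum>i\<in>UNIV. \<Sum>j\<in>UNIV. V $ i $ j * grad_field u t x $ j $ i)\<^sup>2 + \<rho> * (vel_field u t x \<bullet> vel_field u t x)"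

end

theory Submission
  imports Defs "HOL-Homology.Invariance_of_Domain"
begin

text \<open>Since \<open>F = V R\<close> with \<open>R\<close> constant, the pulled-back gradient \<open>R (\<nabla>U) F\<^sup>-\<^sup>1\<close> of
  \<open>u = R U \<circ> \<chi>\<^sup>-\<^sup>1\<close> satisfies \<open>tr (V R (\<nabla>U) F\<^sup>-\<^sup>1) = tr (F (\<nabla>U) F\<^sup>-\<^sup>1) = tr (\<nabla>U)\<close>, and the
  rotation preserves \<open>|\<dot>u|\<close>; multiplying the densities by \<open>\<Lambda>\<close> then gives \<open>E \<Lambda> = E\<^sub>0\<close>
  pointwise. The mass identity is the change of variables formula, whose Jacobian factor
  \<open>\<Lambda>\<close> cancels the factor \<open>\<Lambda>\<^sup>-\<^sup>1\<close> in \<open>\<rho>\<close>.\<close>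

lemma continuous_on_det:
  fixes F :: "'a::topological_space \<Rightarrow> real^'n^'n"
  assumes "continuous_on S F"
  shows "continuous_on S (\<lambda>x. det (F x))"
  unfolding det_def using assms by (intro continuous_intros) auto

lemma trace_similar:
  fixes A B C :: "'a::comm_semiring_1^'n^'n"
  assumes "B ** A = mat 1"
  shows "trace (A ** C ** B) = trace C"
proof -
  have "trace (A ** C ** B) = trace (B ** (A ** C))"
    by (rule trace_mul_sym)
  also have "\<dots> = trace C"
    using assms by (simp add: matrix_mul_assoc matrix_mul_lid)
  finally show ?thesis .
qed

lemma nn_integral_open_continuous:
  fixes h :: "'a::euclidean_space \<Rightarrow> real"
  assumes A: "open A" and cont: "continuous_on A h" and nonneg: "\<And>x. x \<in> A \<Longrightarrow> 0 \<le> h x"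
  shows "(\<integral>\<^sup>+x\<in>A. ennreal (h x) \<partial>lborel) =
           (if h absolutely_integrable_on A then ennreal (integral A h) else \<infinity>)"
proof (cases "h absolutely_integrable_on A")
  case True
  then have "(h has_integral integral A h) A"
    using absolutely_integrable_on_def integrable_integral by blast
  with True show ?thesis
    using nn_integral_has_integral_lebesgue'[OF nonneg] by simp
next
  case False
  let ?f = "\<lambda>x. indicator A x *\<^sub>R h x"
  have "(\<integral>\<^sup>+x. ennreal (?f x) \<partial>lborel) = \<infinity>"
  proof (rule ccontr)
    assume "(\<integral>\<^sup>+x. ennreal (?f x) \<partial>lborel) \<noteq> \<infinity>"
    moreover have "?f \<in> borel_measurable borel"
      using A cont by (intro borel_measurable_continuous_on_indicator) auto
    ultimately have "?f integrable_on UNIV"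
      using nonneg by (intro nn_integral_integrable_on) (auto simp: indicator_def less_top)
    moreover have "?f = (\<lambda>x. if x \<in> A then h x else 0)"
      by (auto simp: indicator_def)
    ultimately have "h integrable_on A"
      using integrable_restrict_UNIV[of A h] by simp
    with False nonneg show False
      using nonnegative_absolutely_integrable_1 by blast
  qed
  moreover have "(\<integral>\<^sup>+x\<in>A. ennreal (h x) \<partial>lborel) = (\<integral>\<^sup>+x. ennreal (?f x) \<partial>lborel)"
    by (intro nn_integral_cong) (auto simp: indicator_def)
  ultimately show ?thesis using False by simp
qed

lemma nn_integral_change_of_variables_open:
  fixes g :: "real^'n::{finite,wellorder} \<Rightarrow> real^'n::_" and f :: "real^'n::_ \<Rightarrow> real"
  assumes S: "open S"
    and der: "\<And>x. x \<in> S \<Longrightarrow> (g has_derivative g' x) (at x)"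
    and inj: "inj_on g S"
    and f_cont: "continuous_on (g ` S) f" and f_nonneg: "\<And>y. y \<in> g ` S \<Longrightarrow> 0 \<le> f y"
    and Jf_cont: "continuous_on S (\<lambda>x. \<bar>det (matrix (g' x))\<bar> * f (g x))"
  shows "(\<integral>\<^sup>+y\<in>g ` S. ennreal (f y) \<partial>lborel) =
           (\<integral>\<^sup>+x\<in>S. ennreal (\<bar>det (matrix (g' x))\<bar> * f (g x)) \<partial>lborel)"
proof -
  let ?Jf = "\<lambda>x. \<bar>det (matrix (g' x))\<bar> * f (g x)"
  have "continuous_on S g"
    using der by (meson continuous_at_imp_continuous_on has_derivative_continuous)
  then have open_image: "open (g ` S)"
    using invariance_of_domain S inj by blast
  have change: "?Jf absolutely_integrable_on S \<and> integral S ?Jf = b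
            \<longleftrightarrow> f absolutely_integrable_on g ` S \<and> integral (g ` S) f = b" for b
  proof -
    \<comment> \<open>The library states change of variables for vector-valued integrands; read it in \<open>real^1\<close>.\<close>
    have "(\<lambda>x. \<bar>det (matrix (g' x))\<bar> *\<^sub>R vec (f (g x)) :: real^1) absolutely_integrable_on S \<and>
            integral S (\<lambda>x. \<bar>det (matrix (g' x))\<bar> *\<^sub>R vec (f (g x))) = (vec b :: real^1)
          \<longleftrightarrow> (\<lambda>y. vec (f y) :: real^1) absolutely_integrable_on g ` S \<and>
            integral (g ` S) (\<lambda>y. vec (f y)) = (vec b :: real^1)"
      using S der inj by (intro has_absolute_integral_change_of_variables)
        (auto intro: has_derivative_at_withinI)
    then show ?thesis
      by (simp add: absolutely_integrable_on_1_iff integral_on_1_eq)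
  qed
  then have same_integrability: "?Jf absolutely_integrable_on S \<longleftrightarrow> f absolutely_integrable_on g ` S"
    and same_integral: "f absolutely_integrable_on g ` S \<Longrightarrow> integral (g ` S) f = integral S ?Jf"
    by blast+
  have Jf_nonneg: "\<And>x. x \<in> S \<Longrightarrow> 0 \<le> ?Jf x"
    using f_nonneg by simp
  have "(\<integral>\<^sup>+y\<in>g ` S. ennreal (f y) \<partial>lborel) =
          (if f absolutely_integrable_on g ` S then ennreal (integral (g ` S) f) else \<infinity>)"
    by (rule nn_integral_open_continuous[OF open_image f_cont f_nonneg])
  also have "\<dots> = (if ?Jf absolutely_integrable_on S then ennreal (integral S ?Jf) else \<infinity>)"
    using same_integrability same_integral by simp
  also have "\<dots> = (\<integral>\<^sup>+x\<in>S. ennreal (?Jf x) \<partial>lborel)"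
    by (rule nn_integral_open_continuous[OF S Jf_cont Jf_nonneg, symmetric])
  finally show ?thesis .
qed

lemma inv_into_has_derivative_matrix:
  fixes f :: "real^'n \<Rightarrow> real^'n"
  assumes S: "open S" "x \<in> S" and cont: "continuous_on S f" and inj: "inj_on f S"
    and der: "(f has_derivative (\<lambda>h. A *v h)) (at x)" and inverse: "A ** B = mat 1"
  shows "(inv_into S f has_derivative (\<lambda>h. B *v h)) (at (f x))"
proof (rule has_derivative_inverse_strong[OF S cont _ der])
  show "\<And>y. y \<in> S \<Longrightarrow> inv_into S f (f y) = y"
    using inj by simp
  show "(\<lambda>h. A *v h) \<circ> (\<lambda>h. B *v h) = id"
    using inverse by (auto simp: fun_eq_iff matrix_vector_mul_assoc)
qed

lemma grad_field_linear_pullback: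
  assumes g: "(g has_derivative (\<lambda>h. G *v h)) (at y)"
    and W: "(\<lambda>z. W z t) differentiable (at (g y))"
  shows "grad_field (\<lambda>z s. A *v W (g z) s) t y = A ** grad_field W t (g y) ** G"
proof -
  have "((\<lambda>z. W z t) has_derivative (\<lambda>h. grad_field W t (g y) *v h)) (at (g y))"
    unfolding grad_field_def using W jacobian_works by blast
  with g have "((\<lambda>z. W (g z) t) has_derivative (\<lambda>h. grad_field W t (g y) *v (G *v h))) (at y)"
    using diff_chain_at by (fastforce simp: o_def)
  then have "((\<lambda>z. A *v W (g z) t) has_derivative
               (\<lambda>h. A *v (grad_field W t (g y) *v (G *v h)))) (at y)"
    by (rule bounded_linear.has_derivative[OF matrix_vector_mul_bounded_linear])
  then have "((\<lambda>z. A *v W (g z) t) has_derivative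
               (\<lambda>h. (A ** grad_field W t (g y) ** G) *v h)) (at y)"
    by (simp add: matrix_vector_mul_assoc matrix_mul_assoc)
  then show ?thesis
    unfolding grad_field_def jacobian_def
    using frechet_derivative_at by (metis matrix_of_matrix_vector_mul)
qed

lemma vel_field_linear_pullback:
  assumes "(\<lambda>s. W (g y) s) differentiable (at t)"
  shows "vel_field (\<lambda>z s. A *v W (g z) s) t y = A *v vel_field W t (g y)"
proof -
  have "((\<lambda>s. W (g y) s) has_vector_derivative vel_field W t (g y)) (at t)"
    unfolding vel_field_def using assms vector_derivative_works by blast
  then have "((\<lambda>s. A *v W (g y) s) has_vector_derivative A *v vel_field W t (g y)) (at t)"
    by (rule bounded_linear.has_vector_derivative[OF matrix_vector_mul_bounded_linear])
  then show ?thesis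
    unfolding vel_field_def by (rule vector_derivative_at)
qed

lemma E_density_eq_E0_density:
  assumes polar: "F = V ** R" and rot: "orthogonal_matrix R" and J: "det F \<noteq> 0"
    and F_inv: "Fi ** F = mat 1"
    and grad: "grad_field u t x = R ** grad_field U t X ** Fi"
    and vel: "vel_field u t x = R *v vel_field U t X"
  shows "E_density (\<kappa>0 / det F) (\<rho>0 / det F) V u t x * det F = E0_density \<kappa>0 \<rho>0 U t X"
proof -
  have "(\<Sum>i\<in>UNIV. \<Sum>j\<in>UNIV. V $ i $ j * grad_field u t x $ j $ i) = trace (V ** grad_field u t x)"
    by (simp add: trace_def matrix_matrix_mult_def)
  also have "\<dots> = trace (F ** grad_field U t X ** Fi)"
    by (simp add: grad polar matrix_mul_assoc)
  also have "\<dots> = trace (grad_field U t X)"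
    by (rule trace_similar[OF F_inv])
  finally have div: "(\<Sum>i\<in>UNIV. \<Sum>j\<in>UNIV. V $ i $ j * grad_field u t x $ j $ i)
                      = (\<Sum>I\<in>UNIV. grad_field U t X $ I $ I)"
    unfolding trace_def .
  have "orthogonal_transformation (\<lambda>v. R *v v)"
    using rot by (simp add: orthogonal_transformation_matrix)
  then have "vel_field u t x \<bullet> vel_field u t x = vel_field U t X \<bullet> vel_field U t X"
    unfolding vel orthogonal_transformation_def by blast
  with div J show ?thesis
    unfolding E_density_def E0_density_def by (simp add: field_simps)
qed

lemma E_density_pullback_eq_E0_density:
  fixes chi :: "real^3 \<Rightarrow> real^3"
  assumes S: "open S" "X \<in> S" and chi_cont: "continuous_on S chi" and inj: "inj_on chi S"
    and deriv: "(chi has_derivative (\<lambda>h. F *v h)) (at X)" and J: "det F \<noteq> 0"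
    and polar: "F = V ** R" and rot: "orthogonal_matrix R"
    and U_diff_X: "(\<lambda>Y. U Y t) differentiable (at X)"
    and U_diff_t: "(\<lambda>s. U X s) differentiable (at t)"
  shows "E_density (\<kappa>0 / det F) (\<rho>0 / det F) V (\<lambda>x s. R *v U (inv_into S chi x) s) t (chi X)
           * det F = E0_density \<kappa>0 \<rho>0 U t X"
proof -
  obtain Fi where Fi: "F ** Fi = mat 1" "Fi ** F = mat 1"
    using J invertible_det_nz unfolding invertible_def by force
  then have inv_der: "(inv_into S chi has_derivative (\<lambda>h. Fi *v h)) (at (chi X))"
    by (intro inv_into_has_derivative_matrix[OF S chi_cont inj deriv])
  have inv_chi: "inv_into S chi (chi X) = X"
    using inj S(2) by simp
  have "grad_field (\<lambda>x s. R *v U (inv_into S chi x) s) t (chi X) = R ** grad_field U t X ** Fi"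
    using grad_field_linear_pullback[OF inv_der, of U t R] U_diff_X inv_chi by simp
  moreover have "vel_field (\<lambda>x s. R *v U (inv_into S chi x) s) t (chi X) = R *v vel_field U t X"
    using vel_field_linear_pullback[of U "inv_into S chi" "chi X" t R] U_diff_t inv_chi by simp
  ultimately show ?thesis
    by (rule E_density_eq_E0_density[OF polar rot J Fi(2)])
qed

lemma nn_integral_inverse_jacobian_image:
  fixes chi :: "real^'n::{finite,wellorder} \<Rightarrow> real^'n::_"
  assumes S: "open S" and deriv: "\<And>X. X \<in> S \<Longrightarrow> (chi has_derivative (\<lambda>h. F X *v h)) (at X)"
    and F_cont: "continuous_on S F" and inj: "inj_on chi S"
    and J: "\<And>X. X \<in> S \<Longrightarrow> det (F X) > 0" and c: "c \<ge> 0"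
  shows "(\<integral>\<^sup>+x\<in>chi ` S. ennreal (c / det (F (inv_into S chi x))) \<partial>lborel) =
           (\<integral>\<^sup>+X\<in>S. ennreal c \<partial>lborel)"
proof -
  let ?\<rho> = "\<lambda>x. c / det (F (inv_into S chi x))"
  have inv_chi: "\<And>X. X \<in> S \<Longrightarrow> inv_into S chi (chi X) = X"
    using inj by simp
  have "continuous_on S chi"
    using deriv by (meson continuous_at_imp_continuous_on has_derivative_continuous)
  then have "continuous_on (chi ` S) (inv_into S chi)"
    using continuous_on_inverse_open[OF S, of chi "inv_into S chi"] inv_chi by simp
  then have "continuous_on (chi ` S) ?\<rho>"
    using J inv_chi
    by (force intro!: continuous_intros continuous_on_det continuous_on_compose2[OF F_cont])
  moreover have \<rho>_pullback: "\<bar>det (matrix (\<lambda>h. F X *v h))\<bar> * ?\<rho> (chi X) = c" if "X \<in> S" for X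
    using J[OF that] inv_chi[OF that] by simp
  moreover have "0 \<le> ?\<rho> y" if "y \<in> chi ` S" for y
    using that J inv_chi c by (auto intro: less_imp_le divide_nonneg_pos)
  ultimately have "(\<integral>\<^sup>+x\<in>chi ` S. ennreal (?\<rho> x) \<partial>lborel) =
                   (\<integral>\<^sup>+X\<in>S. ennreal (\<bar>det (matrix (\<lambda>h. F X *v h))\<bar> * ?\<rho> (chi X)) \<partial>lborel)"
    by (intro nn_integral_change_of_variables_open[OF S deriv inj])
      (auto simp: continuous_on_cong[OF refl \<rho>_pullback])
  also have "\<dots> = (\<integral>\<^sup>+X\<in>S. ennreal c \<partial>lborel)"
    using \<rho>_pullback by (intro set_nn_integral_cong) auto
  finally show ?thesis .
qed

theorem lemma1:
  fixes \<Omega> :: "(real^3) set"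
    and chi :: "real^3 \<Rightarrow> real^3"
    and F V :: "real^3 \<Rightarrow> real^3^3"
    and R :: "real^3^3"
    and \<kappa>0 \<rho>0 :: real
    and U :: "real^3 \<Rightarrow> real \<Rightarrow> real^3"
  assumes dom: "open \<Omega>" "connected \<Omega>" "\<Omega> \<noteq> {}"
    and deriv: "\<And>X. X \<in> \<Omega> \<Longrightarrow> (chi has_derivative (\<lambda>h. F X *v h)) (at X)"
    and C1: "continuous_on \<Omega> F"
    and inj: "inj_on chi \<Omega>"
    and Jpos: "\<And>X. X \<in> \<Omega> \<Longrightarrow> det (F X) > 0"
    and R_rot: "orthogonal_matrix R" "det R = 1"
    and V_sym: "\<And>X. X \<in> \<Omega> \<Longrightarrow> transpose (V X) = V X"
    and V_pd: "\<And>X v. X \<in> \<Omega> \<Longrightarrow> v \<noteq> 0 \<Longrightarrow> v \<bullet> (V X *v v) > 0"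
    and V_sq: "\<And>X. X \<in> \<Omega> \<Longrightarrow> V X ** V X = F X ** transpose (F X)"
    and polar: "\<And>X. X \<in> \<Omega> \<Longrightarrow> F X = V X ** R"
    and pos: "\<kappa>0 > 0" "\<rho>0 > 0"
    and U_diff_X: "\<And>X t. X \<in> \<Omega> \<Longrightarrow> (\<lambda>Y. U Y t) differentiable (at X)"
    and U_diff_t: "\<And>X t. X \<in> \<Omega> \<Longrightarrow> (\<lambda>s. U X s) differentiable (at t)"
  shows "(\<forall>X\<in>\<Omega>. \<forall>t.
            let u = (\<lambda>x s. R *v U (inv_into \<Omega> chi x) s);
                \<Lambda> = det (F X)
            in E_density (\<kappa>0 / \<Lambda>) (\<rho>0 / \<Lambda>) (V X) u t (chi X) * \<Lambda>
               = E0_density \<kappa>0 \<rho>0 U t X)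
       \<and> (\<integral>\<^sup>+ x \<in> chi ` \<Omega>. ennreal (\<rho>0 / det (F (inv_into \<Omega> chi x))) \<partial>lborel)
           = (\<integral>\<^sup>+ X \<in> \<Omega>. ennreal \<rho>0 \<partial>lborel)"
proof -
  have "continuous_on \<Omega> chi"
    using deriv by (meson continuous_at_imp_continuous_on has_derivative_continuous)
  then have "E_density (\<kappa>0 / det (F X)) (\<rho>0 / det (F X)) (V X)
               (\<lambda>x s. R *v U (inv_into \<Omega> chi x) s) t (chi X) * det (F X)
             = E0_density \<kappa>0 \<rho>0 U t X" if "X \<in> \<Omega>" for X t
    using that Jpos[OF that]
    by (intro E_density_pullback_eq_E0_density[OF dom(1) _ _ inj deriv _ polar R_rot(1)
          U_diff_X U_diff_t]) auto
  moreover have "(\<integral>\<^sup>+x\<in>chi ` \<Omega>. ennreal (\<rho>0 / det (F (inv_into \<Omega> chi x))) \<partial>lborel)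
                 = (\<integral>\<^sup>+X\<in>\<Omega>. ennreal \<rho>0 \<partial>lborel)"
    using pos(2) by (intro nn_integral_inverse_jacobian_image[OF dom(1) deriv C1 inj Jpos]) auto
  ultimately show ?thesis
    by (simp add: Let_def)
qed

end
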